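(* Let $X$ be a real Banach space, $K\subset X$ compact, $\lambda_1,\dots,\lambda_m\in X^*$ with $\|\lambda_j\|_{X^*}=1$, and $w\in\mathbb{R}^m$. Let $\varepsilon>0$ and let $g_\varepsilon\in X$ satisfy $$\|\lambda(g_\varepsilon)-w\|\le\varepsilon\quad\text{and}\quad \operatorname{dist}(g_\varepsilon,K)_X\le\varepsilon .$$ Then $$\|f-g_\varepsilon\|_X\le \varepsilon+2R(K(w,2\varepsilon))_X\qquad\text{for all } f\in K_w .$$ Moreover, if $R(K_w)_X\neq 0$, then for every $C>2$ there is $\varepsilon_0>0$ such that whenever $0<\varepsilon\le\varepsilon_0$ and $g_\varepsilon$ satisfies the two conditions above, $\|f-g_\varepsilon\|_X\le C\,R(K_w)_X$ for all $f\in K_w$.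
   Context: For $g\in X$, $\lambda(g):=(\lambda_1(g),\dots,\lambda_m(g))\in\mathbb{R}^m$; on $\mathbb{R}^m$ use $\|v\|:=\big[\frac1m\sum_{j=1}^m|v_j|^2\big]^{1/2}$. $\operatorname{dist}(g,K)_X:=\inf_{h\in K}\|g-h\|_X$. $K_w:=\{f\in K:\lambda(f)=w\}$ and $K(w,\varepsilon):=\bigcup_{\|w'-w\|\le\varepsilon}K_{w'}$ ($w'\in\mathbb{R}^m$). For $S\subset X$, $R(S)_X:=\inf\{r:\ S\subset B(z,r)_X\text{ for some }z\in X\}$ is the Chebyshev radius, $B(z,r)_X$ the ball of center $z$ and radius $r$. *)

theory Defs
  imports "HOL-Analysis.Analysis"
begin

definition vnorm :: "nat \<Rightarrow> (nat \<Rightarrow> real) \<Rightarrow> real" where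
  "vnorm m v = sqrt ((1 / real m) * (\<Sum>j=1..m. (v j)\<^sup>2))"

definition cheb_radius :: "'a::real_normed_vector set \<Rightarrow> real" where
  "cheb_radius S = Inf {r. 0 \<le> r \<and> (\<exists>z. S \<subseteq> cball z r)}"

definition Kw :: "nat \<Rightarrow> (nat \<Rightarrow> ('a::real_normed_vector \<Rightarrow>\<^sub>L real)) \<Rightarrow> 'a set
    \<Rightarrow> (nat \<Rightarrow> real) \<Rightarrow> 'a set" where
  "Kw m lam K w = {f \<in> K. \<forall>j\<in>{1..m}. blinfun_apply (lam j) f = w j}"

definition Kweps :: "nat \<Rightarrow> (nat \<Rightarrow> ('a::real_normed_vector \<Rightarrow>\<^sub>L real)) \<Rightarrow> 'a set
    \<Rightarrow> (nat \<Rightarrow> real) \<Rightarrow> real \<Rightarrow> 'a set" where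
  "Kweps m lam K w e = \<Union> {Kw m lam K w' | w'. vnorm m (\<lambda>j. w' j - w j) \<le> e}"

end

theory Submission
  imports Defs
begin

text \<open>
  Pick a nearest point h of K to g. Since the functionals have norm one, \<lambda> is 1-Lipschitz
  for the normalized Euclidean norm, so h \<in> K(w, 2\<epsilon>); as f \<in> K_w \<subseteq> K(w, 2\<epsilon>) too,
  the points f and h lie in a common ball of radius R(K(w, 2\<epsilon>)), which gives the first bound.
  For the second, compactness shows that points of K on which \<lambda> is nearly w are close
  to K_w: for every \<eta> > 0 there is \<delta> > 0 with K(w, \<delta>) within distance \<eta> of K_w.
  Replacing h by a point of K_w at distance < \<eta> bounds \<parallel>f - g\<parallel> by 2 R(K_w) + \<eta> + \<epsilon>.
\<close>

lemma vnorm_nonneg: "0 \<le> vnorm m v"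
  unfolding vnorm_def by (simp add: sum_nonneg)

lemma vnorm_cong: "(\<And>j. j \<in> {1..m} \<Longrightarrow> u j = v j) \<Longrightarrow> vnorm m u = vnorm m v"
  unfolding vnorm_def by (metis (no_types, lifting) sum.cong)

lemma vnorm_eq_0_iff: "vnorm m v = 0 \<longleftrightarrow> (\<forall>j\<in>{1..m}. v j = 0)"
proof (cases "m = 0")
  case False
  then have "vnorm m v = 0 \<longleftrightarrow> (\<Sum>j=1..m. (v j)\<^sup>2) = 0"
    unfolding vnorm_def by simp
  also have "\<dots> \<longleftrightarrow> (\<forall>j\<in>{1..m}. v j = 0)"
    by (simp add: sum_nonneg_eq_0_iff)
  finally show ?thesis .
qed (simp add: vnorm_def)

lemma vnorm_add_le: "vnorm m (\<lambda>j. u j + v j) \<le> vnorm m u + vnorm m v"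
proof -
  have vnorm_L2: "vnorm m x = sqrt (1 / real m) * L2_set x {1..m}" for x
    unfolding vnorm_def L2_set_def by (simp add: real_sqrt_mult[symmetric])
  show ?thesis
    unfolding vnorm_L2 distrib_left[symmetric]
    by (intro mult_left_mono L2_set_triangle_ineq) simp
qed

lemma vnorm_le_bound:
  assumes "0 \<le> c" and "\<And>j. j \<in> {1..m} \<Longrightarrow> \<bar>v j\<bar> \<le> c"
  shows "vnorm m v \<le> c"
proof (cases "m = 0")
  case False
  have "(\<Sum>j=1..m. (v j)\<^sup>2) \<le> (\<Sum>j=1..m. c\<^sup>2)"
    using assms by (intro sum_mono) (metis abs_le_square_iff abs_of_nonneg)
  then have "(1 / real m) * (\<Sum>j=1..m. (v j)\<^sup>2) \<le> c\<^sup>2"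
    using False by (simp add: field_simps)
  then show ?thesis
    unfolding vnorm_def using assms(1) real_le_lsqrt by blast
qed (simp add: vnorm_def assms(1))

lemma vnorm_blinfun_diff_le:
  assumes "\<forall>j\<in>{1..m}. norm (lam j) \<le> 1"
  shows "vnorm m (\<lambda>j. blinfun_apply (lam j) x - blinfun_apply (lam j) y) \<le> norm (x - y)"
proof (rule vnorm_le_bound)
  fix j assume "j \<in> {1..m}"
  have "\<bar>blinfun_apply (lam j) x - blinfun_apply (lam j) y\<bar> = norm (blinfun_apply (lam j) (x - y))"
    by (simp add: blinfun.diff_right)
  also have "\<dots> \<le> norm (lam j) * norm (x - y)"
    by (rule norm_blinfun)
  also have "\<dots> \<le> norm (x - y)"
    using assms \<open>j \<in> {1..m}\<close> by (simp add: mult_left_le_one_le)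
  finally show "\<bar>blinfun_apply (lam j) x - blinfun_apply (lam j) y\<bar> \<le> norm (x - y)" .
qed simp

lemma vnorm_blinfun_residual_le:
  assumes "\<forall>j\<in>{1..m}. norm (lam j) \<le> 1"
  shows "vnorm m (\<lambda>j. blinfun_apply (lam j) x - w j)
    \<le> norm (x - y) + vnorm m (\<lambda>j. blinfun_apply (lam j) y - w j)"
proof -
  have "vnorm m (\<lambda>j. blinfun_apply (lam j) x - w j)
      = vnorm m (\<lambda>j. (blinfun_apply (lam j) x - blinfun_apply (lam j) y) + (blinfun_apply (lam j) y - w j))"
    by simp
  also have "\<dots> \<le> vnorm m (\<lambda>j. blinfun_apply (lam j) x - blinfun_apply (lam j) y)
      + vnorm m (\<lambda>j. blinfun_apply (lam j) y - w j)"
    by (rule vnorm_add_le)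
  finally show ?thesis
    using vnorm_blinfun_diff_le[OF assms, of x y] by linarith
qed

lemma cheb_radius_nonneg: "bounded S \<Longrightarrow> 0 \<le> cheb_radius S"
  unfolding cheb_radius_def bounded_subset_cball by (intro cInf_greatest) auto

lemma dist_le_2_cheb_radius:
  assumes "bounded S" "x \<in> S" "y \<in> S"
  shows "dist x y \<le> 2 * cheb_radius S"
proof -
  have "dist x y / 2 \<le> cheb_radius S"
    unfolding cheb_radius_def
  proof (rule cInf_greatest)
    show "{r. 0 \<le> r \<and> (\<exists>z. S \<subseteq> cball z r)} \<noteq> {}"
      using assms(1) unfolding bounded_subset_cball by blast
  next
    fix r assume "r \<in> {r. 0 \<le> r \<and> (\<exists>z. S \<subseteq> cball z r)}"
    then obtain z where "S \<subseteq> cball z r"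
      by blast
    then have "dist z x \<le> r" "dist z y \<le> r"
      using assms(2,3) by auto
    then show "dist x y / 2 \<le> r"
      using dist_triangle2[of x y z] by (simp add: dist_commute)
  qed
  then show ?thesis by simp
qed

lemma Kw_eq_vnorm_zero:
  "Kw m lam K w = {h \<in> K. vnorm m (\<lambda>j. blinfun_apply (lam j) h - w j) = 0}"
  unfolding Kw_def vnorm_eq_0_iff by simp

lemma mem_Kweps_iff:
  "h \<in> Kweps m lam K w e \<longleftrightarrow> h \<in> K \<and> vnorm m (\<lambda>j. blinfun_apply (lam j) h - w j) \<le> e"
proof
  assume "h \<in> Kweps m lam K w e"
  then obtain w' where w': "vnorm m (\<lambda>j. w' j - w j) \<le> e" "h \<in> Kw m lam K w'"
    unfolding Kweps_def by blast
  then have "vnorm m (\<lambda>j. blinfun_apply (lam j) h - w j) = vnorm m (\<lambda>j. w' j - w j)"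
    unfolding Kw_def by (intro vnorm_cong) simp
  then show "h \<in> K \<and> vnorm m (\<lambda>j. blinfun_apply (lam j) h - w j) \<le> e"
    using w' unfolding Kw_def by simp
next
  assume h: "h \<in> K \<and> vnorm m (\<lambda>j. blinfun_apply (lam j) h - w j) \<le> e"
  let ?w' = "\<lambda>j. blinfun_apply (lam j) h"
  have "h \<in> Kw m lam K ?w'"
    using h unfolding Kw_def by simp
  then show "h \<in> Kweps m lam K w e"
    using h unfolding Kweps_def by blast
qed

lemma Kw_subset: "Kw m lam K w \<subseteq> K"
  unfolding Kw_def by blast

lemma Kw_subset_Kweps: "0 \<le> e \<Longrightarrow> Kw m lam K w \<subseteq> Kweps m lam K w e"
  unfolding Kw_eq_vnorm_zero subset_iff mem_Kweps_iff by simp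

lemma Kweps_subset: "Kweps m lam K w e \<subseteq> K"
  unfolding subset_iff mem_Kweps_iff by simp

lemma compact_infdist_attained:
  fixes K :: "'a::metric_space set"
  assumes "compact K" "K \<noteq> {}"
  obtains h where "h \<in> K" "dist x h = infdist x K"
proof -
  have "continuous_on K (dist x)"
    by (intro continuous_intros)
  then obtain h where h: "h \<in> K" "\<forall>y\<in>K. dist x h \<le> dist x y"
    using continuous_attains_inf[OF assms] by blast
  have "dist x h \<le> infdist x K"
    unfolding infdist_notempty[OF assms(2)] using assms(2) h(2) by (intro cINF_greatest) auto
  then show ?thesis
    using that h(1) infdist_le[OF h(1), of x] by (meson order_antisym)
qed

lemma infdist_lessE:
  assumes "infdist x A < e" "A \<noteq> {}"
  obtains a where "a \<in> A" "dist x a < e"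
  using assms unfolding infdist_notempty[OF assms(2)] by (auto simp: cINF_less_iff)

lemma compact_small_norm_near_zeros:
  fixes \<phi> :: "'a::metric_space \<Rightarrow> 'b::real_normed_vector"
  assumes "compact K" "continuous_on K \<phi>" "0 < \<eta>"
  obtains \<delta> where "0 < \<delta>"
    "\<And>x. x \<in> K \<Longrightarrow> norm (\<phi> x) \<le> \<delta> \<Longrightarrow> infdist x {z \<in> K. \<phi> z = 0} < \<eta>"
proof -
  define Z where "Z = {z \<in> K. \<phi> z = 0}"
  define A where "A = K \<inter> {x. \<eta> \<le> infdist x Z}"
  have "compact A"
    unfolding A_def using assms(1)
    by (intro compact_Int_closed closed_Collect_le continuous_intros)
  show ?thesis
  proof (cases "A = {}")
    case True
    then show ?thesis
      using that[of 1] unfolding A_def Z_def by force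
  next
    case False
    obtain a where a: "a \<in> A" "\<And>x. x \<in> A \<Longrightarrow> norm (\<phi> a) \<le> norm (\<phi> x)"
      using continuous_attains_inf[OF \<open>compact A\<close> False, of "\<lambda>x. norm (\<phi> x)"]
        continuous_on_subset[OF assms(2)] continuous_on_norm
      unfolding A_def by (metis Int_lower1)
    have "a \<notin> Z"
      using a(1) assms(3) unfolding A_def by auto
    then have "0 < norm (\<phi> a)"
      using a(1) unfolding A_def Z_def by auto
    show ?thesis
    proof (rule that[of "norm (\<phi> a) / 2"])
      fix x assume "x \<in> K" "norm (\<phi> x) \<le> norm (\<phi> a) / 2"
      then have "\<not> norm (\<phi> a) \<le> norm (\<phi> x)"
        using \<open>0 < norm (\<phi> a)\<close> by linarith
      then have "x \<notin> A"
        using a(2) by blast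
      then show "infdist x {z \<in> K. \<phi> z = 0} < \<eta>"
        using \<open>x \<in> K\<close> unfolding A_def Z_def by auto
    qed (use \<open>0 < norm (\<phi> a)\<close> in simp)
  qed
qed

lemma approximant_near_Kweps:
  assumes "compact K" "K \<noteq> {}" "\<forall>j\<in>{1..m}. norm (lam j) \<le> 1"
    and "vnorm m (\<lambda>j. blinfun_apply (lam j) g - w j) \<le> e" "infdist g K \<le> e"
  obtains h where "h \<in> Kweps m lam K w (2 * e)" "norm (g - h) \<le> e"
proof -
  obtain h where "h \<in> K" "dist g h = infdist g K"
    using compact_infdist_attained[OF assms(1,2)] .
  then have "norm (g - h) \<le> e"
    using assms(5) by (simp add: dist_norm)
  moreover have "vnorm m (\<lambda>j. blinfun_apply (lam j) h - w j) \<le> 2 * e"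
    using vnorm_blinfun_residual_le[OF assms(3), of h w g] assms(4) \<open>norm (g - h) \<le> e\<close>
    by (simp add: norm_minus_commute)
  ultimately show ?thesis
    using that \<open>h \<in> K\<close> by (simp add: mem_Kweps_iff)
qed

lemma Kw_approximation_bound:
  assumes "compact K" "\<forall>j\<in>{1..m}. norm (lam j) \<le> 1"
    and "vnorm m (\<lambda>j. blinfun_apply (lam j) g - w j) \<le> e" "infdist g K \<le> e"
    and "f \<in> Kw m lam K w"
  shows "norm (f - g) \<le> e + 2 * cheb_radius (Kweps m lam K w (2 * e))"
proof -
  let ?S = "Kweps m lam K w (2 * e)"
  have "K \<noteq> {}"
    using assms(5) Kw_subset by blast
  then obtain h where "h \<in> ?S" "norm (g - h) \<le> e"
    using approximant_near_Kweps[OF assms(1) _ assms(2-4)] by blast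
  moreover have "f \<in> ?S"
  proof -
    have "0 \<le> e"
      using vnorm_nonneg assms(3) by (rule order_trans)
    then show ?thesis
      using Kw_subset_Kweps[of "2 * e" m lam K w] assms(5) by auto
  qed
  moreover have "bounded ?S"
    using bounded_subset[OF compact_imp_bounded[OF assms(1)] Kweps_subset] .
  ultimately have "norm (f - h) \<le> 2 * cheb_radius ?S" "norm (g - h) \<le> e"
    using dist_le_2_cheb_radius by (auto simp: dist_norm)
  then show ?thesis
    using norm_triangle_ineq4[of "f - h" "g - h"] by simp
qed

lemma Kw_approximation_bound_eventually:
  assumes "compact K" "\<forall>j\<in>{1..m}. norm (lam j) \<le> 1" "0 < \<eta>"
  obtains e0 where "0 < e0"
    "\<And>e g f. e \<le> e0 \<Longrightarrow> vnorm m (\<lambda>j. blinfun_apply (lam j) g - w j) \<le> e \<Longrightarrow>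
      infdist g K \<le> e \<Longrightarrow> f \<in> Kw m lam K w \<Longrightarrow>
      norm (f - g) \<le> 2 * cheb_radius (Kw m lam K w) + \<eta>"
proof -
  let ?\<phi> = "\<lambda>h. vnorm m (\<lambda>j. blinfun_apply (lam j) h - w j)"
  have "continuous_on K ?\<phi>"
    unfolding vnorm_def by (intro continuous_intros)
  then obtain \<delta> where "0 < \<delta>" and \<delta>:
    "\<And>x. x \<in> K \<Longrightarrow> norm (?\<phi> x) \<le> \<delta> \<Longrightarrow> infdist x (Kw m lam K w) < \<eta> / 2"
    using compact_small_norm_near_zeros[OF assms(1), of ?\<phi> "\<eta> / 2"] assms(3)
    unfolding Kw_eq_vnorm_zero by auto
  show ?thesis
  proof (rule that[of "min (\<delta> / 2) (\<eta> / 2)"])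
    fix e g f
    assume e: "e \<le> min (\<delta> / 2) (\<eta> / 2)" and g: "?\<phi> g \<le> e" "infdist g K \<le> e"
      and f: "f \<in> Kw m lam K w"
    have "K \<noteq> {}"
      using f Kw_subset by blast
    then obtain h where h: "h \<in> Kweps m lam K w (2 * e)" "norm (g - h) \<le> e"
      using approximant_near_Kweps[OF assms(1) _ assms(2) g] by blast
    then have "h \<in> K" "?\<phi> h \<le> 2 * e"
      by (simp_all add: mem_Kweps_iff)
    then have "infdist h (Kw m lam K w) < \<eta> / 2"
      using \<delta>[of h] e by (simp add: vnorm_nonneg)
    then obtain h' where h': "h' \<in> Kw m lam K w" "dist h h' < \<eta> / 2"
      using infdist_lessE f by blast
    have "bounded (Kw m lam K w)"
      using bounded_subset[OF compact_imp_bounded[OF assms(1)] Kw_subset] .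
    then have "norm (f - h') \<le> 2 * cheb_radius (Kw m lam K w)"
      using dist_le_2_cheb_radius f h'(1) by (metis dist_norm)
    moreover have "norm (f - g) \<le> norm (f - h') + norm (h - h') + norm (g - h)"
      using norm_triangle_ineq[of "f - h'" "h' - h"] norm_triangle_ineq4[of "f - h" "g - h"]
      by (simp add: norm_minus_commute)
    ultimately show "norm (f - g) \<le> 2 * cheb_radius (Kw m lam K w) + \<eta>"
      using h(2) h'(2) e unfolding dist_norm by linarith
  qed (use \<open>0 < \<delta>\<close> assms(3) in simp)
qed

theorem theorem2p3:
  fixes K :: "'a::banach set" and lam :: "nat \<Rightarrow> ('a \<Rightarrow>\<^sub>L real)"
    and w :: "nat \<Rightarrow> real" and m :: nat
  assumes "0 < m"
    and "compact K"
    and "\<forall>j\<in>{1..m}. norm (lam j) = 1"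
  shows "(\<forall>e g. 0 < e \<longrightarrow> vnorm m (\<lambda>j. blinfun_apply (lam j) g - w j) \<le> e
            \<longrightarrow> infdist g K \<le> e
            \<longrightarrow> (\<forall>f\<in>Kw m lam K w. norm (f - g) \<le> e + 2 * cheb_radius (Kweps m lam K w (2 * e))))
       \<and> (cheb_radius (Kw m lam K w) \<noteq> 0 \<longrightarrow>
           (\<forall>C>2. \<exists>e0>0. \<forall>e g. 0 < e \<longrightarrow> e \<le> e0
              \<longrightarrow> vnorm m (\<lambda>j. blinfun_apply (lam j) g - w j) \<le> e
              \<longrightarrow> infdist g K \<le> e
              \<longrightarrow> (\<forall>f\<in>Kw m lam K w. norm (f - g) \<le> C * cheb_radius (Kw m lam K w))))"
proof -
  have lam: "\<forall>j\<in>{1..m}. norm (lam j) \<le> 1"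
    using assms(3) by simp
  let ?R = "cheb_radius (Kw m lam K w)"
  show ?thesis
  proof (intro conjI allI impI ballI)
    fix e g f
    assume "0 < e" "vnorm m (\<lambda>j. blinfun_apply (lam j) g - w j) \<le> e" "infdist g K \<le> e"
      "f \<in> Kw m lam K w"
    then show "norm (f - g) \<le> e + 2 * cheb_radius (Kweps m lam K w (2 * e))"
      using Kw_approximation_bound[OF assms(2) lam] by blast
  next
    fix C :: real
    assume "?R \<noteq> 0" "2 < C"
    moreover have "0 \<le> ?R"
      using cheb_radius_nonneg bounded_subset[OF compact_imp_bounded[OF assms(2)] Kw_subset] .
    ultimately have "0 < (C - 2) * ?R"
      by simp
    then obtain e0 where "0 < e0" and e0: "\<And>e g f. e \<le> e0 \<Longrightarrow>
        vnorm m (\<lambda>j. blinfun_apply (lam j) g - w j) \<le> e \<Longrightarrow> infdist g K \<le> e \<Longrightarrow>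
        f \<in> Kw m lam K w \<Longrightarrow> norm (f - g) \<le> 2 * ?R + (C - 2) * ?R"
      using Kw_approximation_bound_eventually[OF assms(2) lam] by blast
    show "\<exists>e0>0. \<forall>e g. 0 < e \<longrightarrow> e \<le> e0
        \<longrightarrow> vnorm m (\<lambda>j. blinfun_apply (lam j) g - w j) \<le> e \<longrightarrow> infdist g K \<le> e
        \<longrightarrow> (\<forall>f\<in>Kw m lam K w. norm (f - g) \<le> C * ?R)"
      using \<open>0 < e0\<close> e0 by (intro exI[of _ e0]) (auto simp: algebra_simps)
  qed
qed

end
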